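(* Let $F=(C_1,\dots,C_m)$ be a flag of almost affine codes of length $n$, $E=\{1,\dots,n\}$, and let $r_i$ be the rank function of the matroid associated to $C_i$. Define $\eta_F=\sum_{i=1}^m(-1)^{m-i}r_i^*$, $\theta_F=\sum_{i=1}^m(-1)^{i+1}\overline{r_i}$, $\pi_F=\sum_{i=1}^m(-1)^{m-i}\overline{r_i^*}$, and $\rho_F=\sum_{i=1}^m(-1)^{i+1}r_i$. Then $(E,\eta_F)$, $(E,\theta_F)$ and $(E,\pi_F)$ are demi-matroids, and moreover $\theta_F=\overline{\rho_F}$; $\eta_F=\overline{\rho_F}$ if $m$ is even and $\eta_F=\rho_F^*$ if $m$ is odd; $\pi_F=\rho_F$ if $m$ is even and $\pi_F=(\overline{\rho_F})^*$ if $m$ is odd.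
   Context: An almost affine code over a finite alphabet $A$ of length $n$ and dimension $k$ is a subset $C\subseteq A^n$ with $|C|=|A|^k$ such that for every $X\subseteq E$, $\log_{|A|}|C_X|$ is a nonnegative integer ($C_X$ = projection onto coordinates $X$); its associated matroid has rank function $r(X)=\log_{|A|}|C_X|$. A flag of almost affine codes is a sequence $(C_1,\dots,C_m)$ of almost affine codes over the same alphabet and of the same length with each $C_{j+1}\subseteq C_j$ itself an almost affine code. A demi-matroid is $(E,r)$ with $r:2^E\to\mathbb{N}$, $r(\emptyset)=0$, and $r(X)\le r(X\cup\{x\})\le r(X)+1$. For any function $r$ on $2^E$: $r^*(X)=|X|+r(E\setminus X)-r(E)$ and $\overline{r}(X)=r(E)-r(E\setminus X)$. *)

theory Defs
  imports Main "HOL-Library.FuncSet"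
begin

text \<open>Words of length n over the alphabet A are functions E = {1..n} -> A
  (extensional, i.e. undefined outside E).\<close>

definition ground :: "nat \<Rightarrow> nat set" where
  "ground n = {1..n}"

definition proj :: "(nat \<Rightarrow> 'a) set \<Rightarrow> nat set \<Rightarrow> (nat \<Rightarrow> 'a) set" where
  "proj C X = (\<lambda>c. restrict c X) ` C"

definition almost_affine :: "'a set \<Rightarrow> nat \<Rightarrow> nat \<Rightarrow> (nat \<Rightarrow> 'a) set \<Rightarrow> bool" where
  "almost_affine A n k C \<longleftrightarrow>
     finite A \<and> card A \<ge> 2 \<and>
     C \<subseteq> PiE (ground n) (\<lambda>_. A) \<and>
     card C = card A ^ k \<and>
     (\<forall>X \<subseteq> ground n. \<exists>r::nat. card (proj C X) = card A ^ r)"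

definition code_rank :: "'a set \<Rightarrow> (nat \<Rightarrow> 'a) set \<Rightarrow> nat set \<Rightarrow> int" where
  "code_rank A C X = int (THE r::nat. card (proj C X) = card A ^ r)"

definition flag_aac :: "'a set \<Rightarrow> nat \<Rightarrow> nat \<Rightarrow> (nat \<Rightarrow> (nat \<Rightarrow> 'a) set) \<Rightarrow> bool" where
  "flag_aac A n m C \<longleftrightarrow> m \<ge> 1 \<and>
     (\<forall>i\<in>{1..m}. \<exists>k. almost_affine A n k (C i)) \<and>
     (\<forall>j. 1 \<le> j \<and> j < m \<longrightarrow> C (Suc j) \<subseteq> C j)"

definition demi_matroid :: "nat set \<Rightarrow> (nat set \<Rightarrow> int) \<Rightarrow> bool" where
  "demi_matroid E r \<longleftrightarrow> r {} = 0 \<and>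
     (\<forall>X \<subseteq> E. 0 \<le> r X \<and>
        (\<forall>x\<in>E. r X \<le> r (insert x X) \<and> r (insert x X) \<le> r X + 1))"

definition dualf :: "nat set \<Rightarrow> (nat set \<Rightarrow> int) \<Rightarrow> nat set \<Rightarrow> int" where
  "dualf E r X = int (card X) + r (E - X) - r E"

definition barf :: "nat set \<Rightarrow> (nat set \<Rightarrow> int) \<Rightarrow> nat set \<Rightarrow> int" where
  "barf E r X = r E - r (E - X)"

definition etaF :: "'a set \<Rightarrow> nat \<Rightarrow> nat \<Rightarrow> (nat \<Rightarrow> (nat \<Rightarrow> 'a) set) \<Rightarrow> nat set \<Rightarrow> int" where
  "etaF A n m C X = (\<Sum>i=1..m. (-1)^(m-i) * dualf (ground n) (code_rank A (C i)) X)"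

definition thetaF :: "'a set \<Rightarrow> nat \<Rightarrow> nat \<Rightarrow> (nat \<Rightarrow> (nat \<Rightarrow> 'a) set) \<Rightarrow> nat set \<Rightarrow> int" where
  "thetaF A n m C X = (\<Sum>i=1..m. (-1)^(i+1) * barf (ground n) (code_rank A (C i)) X)"

definition piF :: "'a set \<Rightarrow> nat \<Rightarrow> nat \<Rightarrow> (nat \<Rightarrow> (nat \<Rightarrow> 'a) set) \<Rightarrow> nat set \<Rightarrow> int" where
  "piF A n m C X = (\<Sum>i=1..m. (-1)^(m-i) * barf (ground n) (dualf (ground n) (code_rank A (C i))) X)"

definition rhoF :: "'a set \<Rightarrow> nat \<Rightarrow> nat \<Rightarrow> (nat \<Rightarrow> (nat \<Rightarrow> 'a) set) \<Rightarrow> nat set \<Rightarrow> int" where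
  "rhoF A n m C X = (\<Sum>i=1..m. (-1)^(i+1) * code_rank A (C i) X)"

end

theory Submission
  imports Defs
begin

text \<open>For each code C_i the increment r_i(X + x) - r_i(X) is 0 or 1, and the increments
  decrease along the flag: if adding the coordinate x does not enlarge the projection of C_i,
  the restriction map is injective on it, hence also on the projection of the subcode C_(i+1).
  An alternating sum of a decreasing sequence in {0,1} is 0 or 1, so rho_F is a demi-matroid.
  By linearity theta_F is the bar of rho_F; since (-1)^(m-i) = (-1)^(m+1) (-1)^(i+1), up to the
  sign (-1)^(m+1) eta_F is [m odd] |X| minus the bar of rho_F and pi_F is [m odd] |X| minus rho_F.
  These are rho_F, its bar, its dual or the dual of its bar, and demi-matroids are closed under
  bar and dual.\<close>

lemma demi_matroidI:
  assumes "finite E" "r {} = 0"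
    and incr: "\<And>X x. X \<subseteq> E \<Longrightarrow> x \<in> E \<Longrightarrow> r X \<le> r (insert x X) \<and> r (insert x X) \<le> r X + 1"
  shows "demi_matroid E r"
proof -
  have "0 \<le> r X" if "X \<subseteq> E" for X
  proof -
    have "finite X" using that assms(1) finite_subset by blast
    from this that show ?thesis
    proof (induction X rule: finite_induct)
      case (insert x X)
      then show ?case using incr[of X x] by fastforce
    qed (simp add: assms(2))
  qed
  then show ?thesis using assms unfolding demi_matroid_def by blast
qed

lemma demi_matroid_cong:
  assumes "\<forall>X \<subseteq> E. f X = g X" "demi_matroid E g"
  shows "demi_matroid E f"
proof -
  have "f {} = g {}" "\<And>X. X \<subseteq> E \<Longrightarrow> f X = g X"
    "\<And>X x. X \<subseteq> E \<Longrightarrow> x \<in> E \<Longrightarrow> f (insert x X) = g (insert x X)"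
    using assms(1) by auto
  then show ?thesis using assms(2) unfolding demi_matroid_def by simp
qed

lemma demi_matroid_complement_insert:
  assumes "demi_matroid E r" "X \<subseteq> E" "x \<in> E" "x \<notin> X"
  shows "r (E - insert x X) \<le> r (E - X) \<and> r (E - X) \<le> r (E - insert x X) + 1"
proof -
  have "E - X = insert x (E - insert x X)" using assms(3,4) by auto
  then show ?thesis using assms(1,3) unfolding demi_matroid_def by (metis Diff_subset)
qed

lemma demi_matroid_barf:
  assumes "finite E" "demi_matroid E r"
  shows "demi_matroid E (barf E r)"
proof (rule demi_matroidI[OF assms(1)])
  show "barf E r {} = 0" by (simp add: barf_def)
  fix X x assume "X \<subseteq> E" "x \<in> E"
  then show "barf E r X \<le> barf E r (insert x X) \<and> barf E r (insert x X) \<le> barf E r X + 1"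
    using demi_matroid_complement_insert[OF assms(2), of X x] unfolding barf_def
    by (cases "x \<in> X") (auto simp: insert_absorb)
qed

lemma demi_matroid_dualf:
  assumes "finite E" "demi_matroid E r"
  shows "demi_matroid E (dualf E r)"
proof (rule demi_matroidI[OF assms(1)])
  show "dualf E r {} = 0" by (simp add: dualf_def)
  fix X x assume X: "X \<subseteq> E" and x: "x \<in> E"
  have "finite X" using X assms(1) finite_subset by blast
  then show "dualf E r X \<le> dualf E r (insert x X) \<and> dualf E r (insert x X) \<le> dualf E r X + 1"
    using demi_matroid_complement_insert[OF assms(2) X x] unfolding dualf_def
    by (cases "x \<in> X") (auto simp: insert_absorb)
qed

lemma dualf_eq_card_minus_barf: "dualf E r X = int (card X) - barf E r X"
  unfolding dualf_def barf_def by simp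

lemma barf_barf: "X \<subseteq> E \<Longrightarrow> barf E (barf E r) X = r X - r {}"
  unfolding barf_def by (simp add: double_diff)

lemma barf_dualf:
  assumes "finite E" "X \<subseteq> E"
  shows "barf E (dualf E r) X = int (card X) + r {} - r X"
  using assms unfolding barf_def dualf_def
  by (simp add: double_diff card_Diff_subset card_mono finite_subset of_nat_diff)

lemma neg_one_power_diff:
  assumes "i \<le> m"
  shows "(-1::int)^(m-i) = (-1)^(m+1) * (-1)^(i+1)"
proof -
  have "m + 1 + (i + 1) = (m - i) + 2 * (i + 1)" using assms by simp
  then have "(-1::int)^(m+1) * (-1)^(i+1) = (-1)^((m - i) + 2 * (i + 1))" by (metis power_add)
  then show ?thesis by (simp add: power_add power_mult)
qed

lemma sum_alternating_sign: "(\<Sum>i=1..m. (-1::int)^(i+1)) = of_bool (odd m)"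
  by (induction m) auto

lemma sum_alternating_reverse:
  fixes a :: int and f :: "nat \<Rightarrow> int"
  shows "(\<Sum>i=1..m. (-1)^(m-i) * (a - f i))
       = (-1)^(m+1) * (of_bool (odd m) * a - (\<Sum>i=1..m. (-1)^(i+1) * f i))"
proof -
  have "(\<Sum>i=1..m. (-1)^(m-i) * (a - f i))
      = (-1)^(m+1) * (\<Sum>i=1..m. a * (-1)^(i+1) - (-1)^(i+1) * f i)"
    unfolding sum_distrib_left by (intro sum.cong) (auto simp: neg_one_power_diff algebra_simps)
  also have "\<dots> = (-1)^(m+1) * (a * (\<Sum>i=1..m. (-1)^(i+1)) - (\<Sum>i=1..m. (-1)^(i+1) * f i))"
    by (simp only: sum_subtractf sum_distrib_left)
  finally show ?thesis by (simp only: sum_alternating_sign mult.commute)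
qed

lemma sum_alternating_shift:
  fixes d :: "nat \<Rightarrow> int"
  shows "(\<Sum>i=1..Suc m. (-1)^(i+1) * d i) = d 1 - (\<Sum>i=1..m. (-1)^(i+1) * d (Suc i))"
proof -
  have "(\<Sum>i=1..Suc m. (-1)^(i+1) * d i) = d 1 + (\<Sum>i=Suc 1..Suc m. (-1)^(i+1) * d i)"
    by (simp add: sum.atLeast_Suc_atMost)
  also have "(\<Sum>i=Suc 1..Suc m. (-1)^(i+1) * d i) = (\<Sum>i=1..m. (-1)^(i+2) * d (Suc i))"
    by (simp only: sum.shift_bounds_cl_Suc_ivl) simp
  also have "\<dots> = - (\<Sum>i=1..m. (-1)^(i+1) * d (Suc i))"
    by (simp add: sum_negf[symmetric])
  finally show ?thesis by simp
qed

lemma alternating_sum_antimono_bounds: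
  fixes d :: "nat \<Rightarrow> int"
  assumes "m \<ge> 1" "\<forall>i\<in>{1..m}. 0 \<le> d i" "\<forall>i. 1 \<le> i \<and> i < m \<longrightarrow> d (Suc i) \<le> d i"
  shows "0 \<le> (\<Sum>i=1..m. (-1)^(i+1) * d i) \<and> (\<Sum>i=1..m. (-1)^(i+1) * d i) \<le> d 1"
  using assms
proof (induction m arbitrary: d)
  case (Suc m)
  show ?case
  proof (cases "m = 0")
    case False
    have shift: "(\<Sum>i=1..Suc m. (-1)^(i+1) * d i) = d 1 - (\<Sum>i=1..m. (-1)^(i+1) * d (Suc i))"
      by (rule sum_alternating_shift)
    have "0 \<le> (\<Sum>i=1..m. (-1)^(i+1) * d (Suc i)) \<and> (\<Sum>i=1..m. (-1)^(i+1) * d (Suc i)) \<le> d 2"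
      using Suc.IH[of "\<lambda>i. d (Suc i)"] Suc.prems False by (simp add: numeral_2_eq_2)
    moreover have "d 2 \<le> d 1" using Suc.prems(3) False by (auto simp: numeral_2_eq_2)
    ultimately show ?thesis unfolding shift using Suc.prems(2) False by auto
  qed (use Suc.prems in auto)
qed simp

lemma almost_affine_card_alphabet: "almost_affine A n k C \<Longrightarrow> card A > 1"
  unfolding almost_affine_def by auto

lemma almost_affine_alphabet_words:
  assumes "almost_affine A n k C"
  shows "finite A" "C \<subseteq> PiE (ground n) (\<lambda>_. A)"
proof -
  have "finite A \<and> C \<subseteq> PiE (ground n) (\<lambda>_. A)"
    using assms unfolding almost_affine_def by (elim conjE) (intro conjI)
  then show "finite A" "C \<subseteq> PiE (ground n) (\<lambda>_. A)" by simp_all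
qed

lemma almost_affine_finite_nonempty:
  assumes "almost_affine A n k C"
  shows "finite C" "C \<noteq> {}"
proof -
  have "card C > 0"
    using assms almost_affine_card_alphabet[OF assms] unfolding almost_affine_def by simp
  then show "finite C" "C \<noteq> {}" by (simp_all add: card_gt_0_iff)
qed

lemma code_rank_eqI:
  assumes "almost_affine A n k C" "card (proj C X) = card A ^ r"
  shows "code_rank A C X = int r"
proof -
  have "(THE r. card (proj C X) = card A ^ r) = r"
    using assms(2) almost_affine_card_alphabet[OF assms(1)]
    by (intro the_equality) (auto simp: power_inject_exp)
  then show ?thesis unfolding code_rank_def by simp
qed

lemma code_rank_obtain:
  assumes "almost_affine A n k C" "X \<subseteq> ground n"
  obtains r where "card (proj C X) = card A ^ r" "code_rank A C X = int r"
  using assms code_rank_eqI[OF assms(1)] unfolding almost_affine_def by blast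

lemma code_rank_empty:
  assumes "almost_affine A n k C"
  shows "code_rank A C {} = 0"
proof -
  have "proj C {} = {\<lambda>_. undefined}"
    using almost_affine_finite_nonempty(2)[OF assms] unfolding proj_def by (auto simp: restrict_def)
  then show ?thesis using code_rank_eqI[OF assms, of "{}" 0] by simp
qed

lemma finite_proj: "finite C \<Longrightarrow> finite (proj C X)"
  unfolding proj_def by simp

lemma proj_eq_restrict_proj_insert: "proj C X = (\<lambda>f. restrict f X) ` proj C (insert x X)"
  unfolding proj_def image_image by (simp add: Int_absorb1 subset_insertI)

lemma card_proj_insert_ge: "finite C \<Longrightarrow> card (proj C X) \<le> card (proj C (insert x X))"
  by (subst proj_eq_restrict_proj_insert[of C X x]) (intro card_image_le finite_proj)

lemma card_proj_insert_le:
  assumes "C \<subseteq> PiE (ground n) (\<lambda>_. A)" "x \<in> ground n" "finite C" "finite A"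
  shows "card (proj C (insert x X)) \<le> card (proj C X) * card A"
proof -
  let ?extend = "\<lambda>(f, a). f(x := a)"
  have "proj C (insert x X) \<subseteq> ?extend ` (proj C X \<times> A)"
  proof
    fix g assume "g \<in> proj C (insert x X)"
    then obtain c where c: "c \<in> C" "g = restrict c (insert x X)" unfolding proj_def by auto
    have "g = (restrict c X)(x := c x)" using c(2) by (auto simp: restrict_def)
    moreover have "restrict c X \<in> proj C X" "c x \<in> A"
      using c(1) assms(1,2) unfolding proj_def by (auto simp: PiE_iff)
    ultimately show "g \<in> ?extend ` (proj C X \<times> A)" by force
  qed
  then have "card (proj C (insert x X)) \<le> card (?extend ` (proj C X \<times> A))"
    using finite_proj[OF assms(3)] assms(4) by (intro card_mono) auto
  also have "\<dots> \<le> card (proj C X \<times> A)"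
    using finite_proj[OF assms(3)] assms(4) by (intro card_image_le) auto
  finally show ?thesis by (simp add: card_cartesian_product)
qed

lemma card_proj_insert_eq_subset:
  assumes "D \<subseteq> C" "finite C" "card (proj C (insert x X)) = card (proj C X)"
  shows "card (proj D (insert x X)) = card (proj D X)"
proof -
  let ?res = "\<lambda>f. restrict f X"
  have "card (?res ` proj C (insert x X)) = card (proj C (insert x X))"
    using assms(3) proj_eq_restrict_proj_insert[of C X x] by simp
  then have "inj_on ?res (proj C (insert x X))"
    using eq_card_imp_inj_on finite_proj[OF assms(2)] by blast
  moreover have "proj D (insert x X) \<subseteq> proj C (insert x X)"
    using assms(1) unfolding proj_def by auto
  ultimately have "inj_on ?res (proj D (insert x X))" by (rule inj_on_subset)
  then have "card (?res ` proj D (insert x X)) = card (proj D (insert x X))" by (rule card_image)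
  then show ?thesis using proj_eq_restrict_proj_insert[of D X x] by simp
qed

lemma code_rank_insert:
  assumes "almost_affine A n k C" "X \<subseteq> ground n" "x \<in> ground n"
  shows "code_rank A C X \<le> code_rank A C (insert x X) \<and>
         code_rank A C (insert x X) \<le> code_rank A C X + 1"
proof -
  have q: "card A > 1" by (rule almost_affine_card_alphabet[OF assms(1)])
  note C = almost_affine_finite_nonempty(1)[OF assms(1)] almost_affine_alphabet_words[OF assms(1)]
  obtain a where a: "card (proj C X) = card A ^ a" "code_rank A C X = int a"
    using code_rank_obtain[OF assms(1,2)] .
  have Xx: "insert x X \<subseteq> ground n" using assms(2,3) by simp
  obtain c where c: "card (proj C (insert x X)) = card A ^ c" "code_rank A C (insert x X) = int c"
    using code_rank_obtain[OF assms(1) Xx] .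
  have "card A ^ a \<le> card A ^ c" using card_proj_insert_ge[OF C(1), of X x] a c by simp
  then have "a \<le> c" by (rule power_le_imp_le_exp[OF q])
  have "card A ^ c \<le> card A ^ Suc a"
    using card_proj_insert_le[OF C(3) assms(3) C(1,2), of X] a c by (simp add: mult.commute)
  then have "c \<le> Suc a" by (rule power_le_imp_le_exp[OF q])
  with \<open>a \<le> c\<close> show ?thesis using a c by simp
qed

lemma code_rank_insert_subcode:
  assumes "almost_affine A n k C" "almost_affine A n k' D" "D \<subseteq> C"
    "X \<subseteq> ground n" "x \<in> ground n"
  shows "code_rank A D (insert x X) - code_rank A D X \<le> code_rank A C (insert x X) - code_rank A C X"
proof (cases "code_rank A C (insert x X) = code_rank A C X")
  case True
  obtain a where a: "card (proj C X) = card A ^ a" "code_rank A C X = int a"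
    using code_rank_obtain[OF assms(1,4)] .
  have Xx: "insert x X \<subseteq> ground n" using assms(4,5) by simp
  obtain c where c: "card (proj C (insert x X)) = card A ^ c" "code_rank A C (insert x X) = int c"
    using code_rank_obtain[OF assms(1) Xx] .
  obtain b where b: "card (proj D X) = card A ^ b" "code_rank A D X = int b"
    using code_rank_obtain[OF assms(2,4)] .
  have "card (proj D (insert x X)) = card (proj D X)"
    using card_proj_insert_eq_subset[OF assms(3) almost_affine_finite_nonempty(1)[OF assms(1)]]
      a c True by simp
  then have "code_rank A D (insert x X) = int b" using code_rank_eqI[OF assms(2)] b by simp
  then show ?thesis using True b by simp
next
  case False
  then show ?thesis using code_rank_insert[OF assms(1,4,5)] code_rank_insert[OF assms(2,4,5)] by simp
qed

lemma flag_almost_affine: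
  "flag_aac A n m C \<Longrightarrow> i \<in> {1..m} \<Longrightarrow> \<exists>k. almost_affine A n k (C i)"
  unfolding flag_aac_def by blast

lemma rhoF_empty:
  assumes "flag_aac A n m C"
  shows "rhoF A n m C {} = 0"
  unfolding rhoF_def using code_rank_empty flag_almost_affine[OF assms] by (intro sum.neutral) fastforce

lemma rhoF_insert:
  assumes flag: "flag_aac A n m C" and X: "X \<subseteq> ground n" and x: "x \<in> ground n"
  shows "rhoF A n m C X \<le> rhoF A n m C (insert x X) \<and> rhoF A n m C (insert x X) \<le> rhoF A n m C X + 1"
proof -
  define d where "d i = code_rank A (C i) (insert x X) - code_rank A (C i) X" for i
  have d01: "0 \<le> d i \<and> d i \<le> 1" if i: "i \<in> {1..m}" for i
  proof -
    obtain k where "almost_affine A n k (C i)" using flag_almost_affine[OF flag i] ..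
    from code_rank_insert[OF this X x] show ?thesis unfolding d_def by simp
  qed
  have dec: "d (Suc i) \<le> d i" if i: "1 \<le> i" "i < m" for i
  proof -
    obtain k k' where "almost_affine A n k (C i)" "almost_affine A n k' (C (Suc i))"
      using flag_almost_affine[OF flag, of i] flag_almost_affine[OF flag, of "Suc i"] i by auto
    moreover have "C (Suc i) \<subseteq> C i" using flag i unfolding flag_aac_def by blast
    ultimately show ?thesis unfolding d_def by (rule code_rank_insert_subcode[OF _ _ _ X x])
  qed
  have m: "m \<ge> 1" using flag unfolding flag_aac_def by simp
  have "0 \<le> (\<Sum>i=1..m. (-1)^(i+1) * d i) \<and> (\<Sum>i=1..m. (-1)^(i+1) * d i) \<le> d 1"
    by (rule alternating_sum_antimono_bounds) (use m d01 dec in auto)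
  moreover have "d 1 \<le> 1" using d01 m by simp
  moreover have "rhoF A n m C (insert x X) - rhoF A n m C X = (\<Sum>i=1..m. (-1)^(i+1) * d i)"
    unfolding rhoF_def d_def by (simp add: sum_subtractf[symmetric] right_diff_distrib)
  ultimately show ?thesis by linarith
qed

lemma demi_matroid_rhoF:
  assumes "flag_aac A n m C"
  shows "demi_matroid (ground n) (rhoF A n m C)"
proof (rule demi_matroidI)
  show "finite (ground n)" by (simp add: ground_def)
qed (simp_all add: rhoF_insert[OF assms] rhoF_empty[OF assms])

lemma thetaF_eq_barf_rhoF: "thetaF A n m C X = barf (ground n) (rhoF A n m C) X"
  unfolding thetaF_def barf_def rhoF_def
  by (simp add: sum_subtractf[symmetric] right_diff_distrib)

lemma etaF_eq:
  "etaF A n m C X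
     = (-1)^(m+1) * (of_bool (odd m) * int (card X) - barf (ground n) (rhoF A n m C) X)"
proof -
  have "etaF A n m C X
      = (\<Sum>i=1..m. (-1)^(m-i) * (int (card X) - barf (ground n) (code_rank A (C i)) X))"
    unfolding etaF_def dualf_eq_card_minus_barf ..
  also have "\<dots> = (-1)^(m+1) * (of_bool (odd m) * int (card X) - thetaF A n m C X)"
    unfolding sum_alternating_reverse thetaF_def ..
  finally show ?thesis by (simp only: thetaF_eq_barf_rhoF)
qed

lemma piF_eq:
  assumes "flag_aac A n m C" "X \<subseteq> ground n"
  shows "piF A n m C X = (-1)^(m+1) * (of_bool (odd m) * int (card X) - rhoF A n m C X)"
proof -
  have "barf (ground n) (dualf (ground n) (code_rank A (C i))) X
      = int (card X) - code_rank A (C i) X" if "i \<in> {1..m}" for i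
    using assms(2) code_rank_empty flag_almost_affine[OF assms(1) that]
    by (auto simp: barf_dualf ground_def)
  then have "piF A n m C X = (\<Sum>i=1..m. (-1)^(m-i) * (int (card X) - code_rank A (C i) X))"
    unfolding piF_def by simp
  then show ?thesis unfolding sum_alternating_reverse rhoF_def .
qed

theorem mainTheorem7:
  fixes A :: "'a set" and n m :: nat and C :: "nat \<Rightarrow> (nat \<Rightarrow> 'a) set"
  assumes "flag_aac A n m C"
  defines "E \<equiv> ground n"
  shows "demi_matroid E (etaF A n m C)
    \<and> demi_matroid E (thetaF A n m C)
    \<and> demi_matroid E (piF A n m C)
    \<and> (\<forall>X \<subseteq> E. thetaF A n m C X = barf E (rhoF A n m C) X)
    \<and> (even m \<longrightarrow> (\<forall>X \<subseteq> E. etaF A n m C X = barf E (rhoF A n m C) X))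
    \<and> (odd m \<longrightarrow> (\<forall>X \<subseteq> E. etaF A n m C X = dualf E (rhoF A n m C) X))
    \<and> (even m \<longrightarrow> (\<forall>X \<subseteq> E. piF A n m C X = rhoF A n m C X))
    \<and> (odd m \<longrightarrow> (\<forall>X \<subseteq> E. piF A n m C X = dualf E (barf E (rhoF A n m C)) X))"
proof -
  let ?\<rho> = "rhoF A n m C"
  have fin: "finite E" by (simp add: E_def ground_def)
  have dm: "demi_matroid E ?\<rho>" using demi_matroid_rhoF[OF assms(1)] by (simp add: E_def)
  have \<theta>: "\<forall>X \<subseteq> E. thetaF A n m C X = barf E ?\<rho> X"
    by (simp add: thetaF_eq_barf_rhoF E_def)
  have \<eta>: "(even m \<longrightarrow> (\<forall>X \<subseteq> E. etaF A n m C X = barf E ?\<rho> X))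
      \<and> (odd m \<longrightarrow> (\<forall>X \<subseteq> E. etaF A n m C X = dualf E ?\<rho> X))"
    by (simp add: etaF_eq dualf_eq_card_minus_barf E_def)
  have \<pi>: "(even m \<longrightarrow> (\<forall>X \<subseteq> E. piF A n m C X = ?\<rho> X))
      \<and> (odd m \<longrightarrow> (\<forall>X \<subseteq> E. piF A n m C X = dualf E (barf E ?\<rho>) X))"
    using piF_eq[OF assms(1)] rhoF_empty[OF assms(1)]
    by (simp add: dualf_eq_card_minus_barf barf_barf E_def)
  have "demi_matroid E (etaF A n m C) \<and> demi_matroid E (thetaF A n m C)
      \<and> demi_matroid E (piF A n m C)"
    using \<eta> \<theta> \<pi> dm demi_matroid_cong demi_matroid_barf[OF fin] demi_matroid_dualf[OF fin]
    by metis
  with \<theta> \<eta> \<pi> show ?thesis by blast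
qed

end
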